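(* \[m_{\mathbb{H}}\big((x-i)\ast(x-2i)\big)=m_{\mathbb{H}}(x^2-3xi-2)=\frac{9}{16}+\log 2.\]
   Context: $\mathbb{H}$ denotes the quaternions; $m_{\mathbb{H}}(P)=\int_{|x|=1}\log|P(x)|\,d\mu$ with $\mu$ the probability Haar measure on unit quaternions. The $\ast$-product of slice regular polynomials $\sum x^\ell a_\ell$ and $\sum x^\ell b_\ell$ is $\sum_n x^n\sum_{l=0}^n a_lb_{n-l}$ (coefficients on the right), so $(x-i)\ast(x-2i)=x^2-3xi-2$. *)

theory Defs
  imports "HOL-Analysis.Analysis"
begin

text \<open>Quaternions a + b i + c j + d k are represented as real 4-tuples (a,b,c,d);
  the product-type norm is the Euclidean norm, i.e. the quaternion modulus.\<close>

type_synonym quat = "real \<times> real \<times> real \<times> real"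

fun qmul :: "quat \<Rightarrow> quat \<Rightarrow> quat" where
  "qmul (a1, b1, c1, d1) (a2, b2, c2, d2) =
     (a1*a2 - b1*b2 - c1*c2 - d1*d2,
      a1*b2 + b1*a2 + c1*d2 - d1*c2,
      a1*c2 - b1*d2 + c1*a2 + d1*b2,
      a1*d2 + b1*c2 - c1*b2 + d1*a2)"

definition qone :: quat where "qone = (1, 0, 0, 0)"
definition qi :: quat where "qi = (0, 1, 0, 0)"
definition qreal :: "real \<Rightarrow> quat" where "qreal r = (r, 0, 0, 0)"

fun qpow :: "quat \<Rightarrow> nat \<Rightarrow> quat" where
  "qpow x 0 = qone"
| "qpow x (Suc n) = qmul (qpow x n) x"

text \<open>A slice regular polynomial \<Sum> x^l a_l (coefficients on the right) is given by its
  coefficient list [a_0, a_1, ..., a_n].\<close>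

definition qcoeff :: "quat list \<Rightarrow> nat \<Rightarrow> quat" where
  "qcoeff as l = (if l < length as then as ! l else 0)"

definition qeval :: "quat list \<Rightarrow> quat \<Rightarrow> quat" where
  "qeval as x = (\<Sum>l<length as. qmul (qpow x l) (as ! l))"

definition qstar :: "quat list \<Rightarrow> quat list \<Rightarrow> quat list" where
  "qstar as bs = map (\<lambda>n. \<Sum>l\<in>{0..n}. qmul (qcoeff as l) (qcoeff bs (n - l)))
                     [0..<length as + length bs - 1]"

text \<open>Normalized (probability) Haar measure on the unit quaternions S^3, realised as the
  normalized rotation-invariant surface measure on the unit sphere of R^4 (cone measure):
  push forward of the uniform distribution on the unit ball under radial projection.\<close>

definition haar_S3 :: "quat measure" where
  "haar_S3 = distr (uniform_measure lborel (ball 0 1)) borel (\<lambda>x. x /\<^sub>R norm x)"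

definition mH :: "quat list \<Rightarrow> real" where
  "mH P = (\<integral>x. ln (norm (qeval P x)) \<partial>haar_S3)"

end

theory Submission
  imports Defs "HOL-Real_Asymp.Real_Asymp" "HOL-Probability.Probability_Measure"
begin

(*
  For a unit quaternion q = a + b i + c j + d k one computes |q^2 - 3 q i - 2|^2 = 18 - 18 b - 8 a^2.
  By Archimedes' theorem in dimension four, (a, b) is uniformly distributed on the unit disc when q
  is Haar distributed on the sphere, so m_H is ln 6 minus the mean over the disc of the nonnegative
  function ln 6 - ln (18 - 18 b - 8 a^2) / 2. Integrating out b and substituting a = sin x turns
  this mean into integrals of polynomials in cos x against ln (1 + cos x) and ln (5 + 4 cos x),
  which follow from explicit antiderivatives and the classical identity
  int_0^pi ln (1 - 2 t cos x + t^2) dx = 0 for |t| <= 1. The mean is ln 3 - 9/16.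
*)

section \<open>The polynomial on the unit sphere\<close>

abbreviation example_poly :: "quat list" where
  "example_poly \<equiv> [- qreal 2, - 3 *\<^sub>R qi, qone]"

lemma qstar_example_poly: "qstar [- qi, qone] [- 2 *\<^sub>R qi, qone] = example_poly"
  by (simp add: qstar_def qcoeff_def qi_def qone_def qreal_def upt_rec zero_prod_def)

lemma norm_quat: "norm ((a, b, c, d) :: quat) = sqrt (a\<^sup>2 + b\<^sup>2 + c\<^sup>2 + d\<^sup>2)"
  by (simp add: norm_Pair add.assoc)

lemma qeval_example_poly:
  "qeval example_poly (a, b, c, d) =
     (a\<^sup>2 - b\<^sup>2 - c\<^sup>2 - d\<^sup>2 + 3 * b - 2, 2 * a * b - 3 * a, 2 * a * c - 3 * d, 2 * a * d + 3 * c)"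
  by (simp add: qeval_def qi_def qone_def qreal_def numeral_3_eq_3 lessThan_Suc power2_eq_square
      algebra_simps)

lemma norm_qeval_example_poly_sq:
  assumes "a\<^sup>2 + b\<^sup>2 + c\<^sup>2 + d\<^sup>2 = 1"
  shows "(norm (qeval example_poly (a, b, c, d)))\<^sup>2 = 18 - 18 * b - 8 * a\<^sup>2"
proof -
  have "c\<^sup>2 + d\<^sup>2 = 1 - a\<^sup>2 - b\<^sup>2"
    using assms by simp
  then show ?thesis
    unfolding qeval_example_poly norm_quat
    by (simp add: power2_eq_square) (simp add: algebra_simps power2_eq_square, algebra)
qed

lemma continuous_qeval_example_poly: "continuous_on UNIV (qeval example_poly)"
proof -
  have "qeval example_poly = (\<lambda>x. let a = fst x; b = fst (snd x); c = fst (snd (snd x)); d = snd (snd (snd x))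
      in (a\<^sup>2 - b\<^sup>2 - c\<^sup>2 - d\<^sup>2 + 3 * b - 2, 2 * a * b - 3 * a, 2 * a * c - 3 * d, 2 * a * d + 3 * c))"
  proof
    fix x :: quat
    obtain a b c d where x: "x = (a, b, c, d)"
      by (cases x) auto
    show "qeval example_poly x = (let a = fst x; b = fst (snd x); c = fst (snd (snd x)); d = snd (snd (snd x))
        in (a\<^sup>2 - b\<^sup>2 - c\<^sup>2 - d\<^sup>2 + 3 * b - 2, 2 * a * b - 3 * a, 2 * a * c - 3 * d, 2 * a * d + 3 * c))"
      unfolding x qeval_example_poly by simp
  qed
  then show ?thesis
    unfolding Let_def by (simp only:) (intro continuous_intros)
qed

section \<open>Integrals over intervals\<close>

lemma has_integral_reflect_shift_real:
  fixes f :: "real \<Rightarrow> 'b::real_normed_vector"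
  assumes "(f has_integral I) {c - b..c - a}"
  shows "((\<lambda>x. f (c - x)) has_integral I) {a..b}"
proof -
  have "((\<lambda>x. f (1 *\<^sub>R x + c)) has_integral I /\<^sub>R 1 ^ DIM(real))
          (cbox ((c - b - c) /\<^sub>R 1) ((c - a - c) /\<^sub>R 1))"
    using has_integral_affinity'[of f I "c - b" "c - a" 1 c] assms by simp
  then have "((\<lambda>x. f (x + c)) has_integral I) {-b..-a}" by (simp add: add.commute)
  then show ?thesis
    using has_integral_reflect_real[of "\<lambda>x. f (x + c)" I "-a" "-b"] by simp
qed

lemma continuous_on_x_ln_x: "continuous_on {0..} (\<lambda>x::real. x * ln x)"
  unfolding continuous_on_eq_continuous_within
proof
  fix x :: real assume "x \<in> {0..}"
  show "continuous (at x within {0..}) (\<lambda>x. x * ln x)"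
  proof (cases "x = 0")
    case True
    have "((\<lambda>x::real. x * ln x) \<longlongrightarrow> 0) (at_right 0)" by real_asymp
    then show ?thesis using True by (simp add: continuous_within at_within_Ici_at_right)
  next
    case False
    with \<open>x \<in> {0..}\<close> have "isCont (\<lambda>x. x * ln x) x"
      by (intro continuous_intros) auto
    then show ?thesis by (rule continuous_at_imp_continuous_within)
  qed
qed

lemma has_integral_ln:
  fixes a b :: real
  assumes "0 \<le> a" "a \<le> b"
  shows "(ln has_integral (b * ln b - b) - (a * ln a - a)) {a..b}"
proof -
  let ?F = "\<lambda>x::real. x * ln x - x"
  have "(ln has_integral ?F b - ?F a) {a..b}"
  proof (rule fundamental_theorem_of_calculus_interior)
    show "continuous_on {a..b} ?F"
      using assms by (intro continuous_on_diff continuous_on_id continuous_on_subset[OF continuous_on_x_ln_x]) auto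
    fix x assume "x \<in> {a<..<b}"
    with assms have "0 < x" by simp
    then have "(?F has_real_derivative ln x) (at x)"
      by (auto intro!: derivative_eq_intros)
    then show "(?F has_vector_derivative ln x) (at x)"
      by (simp add: has_real_derivative_iff_has_vector_derivative)
  qed (use assms in simp)
  then show ?thesis by simp
qed

lemma has_integral_ln_affine:
  fixes M k s t :: real
  assumes "0 < k" "s \<le> t" "0 \<le> M - k * t"
  shows "((\<lambda>b. ln (M - k * b)) has_integral
           ((M - k * s) * ln (M - k * s) - (M - k * t) * ln (M - k * t)) / k - (t - s)) {s..t}"
proof -
  let ?G = "\<lambda>b. - ((M - k * b) * ln (M - k * b) - (M - k * b)) / k"
  have nonneg: "0 \<le> M - k * b" if "b \<le> t" for b
    using mult_left_mono[OF that less_imp_le[OF assms(1)]] assms(3) by linarith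
  have "((\<lambda>b. ln (M - k * b)) has_integral ?G t - ?G s) {s..t}"
  proof (rule fundamental_theorem_of_calculus_interior)
    have "continuous_on {s..t} (\<lambda>b. (M - k * b) * ln (M - k * b))"
      using nonneg by (intro continuous_on_compose2[OF continuous_on_x_ln_x, of _ "\<lambda>b. M - k * b"])
        (auto intro!: continuous_intros)
    then show "continuous_on {s..t} ?G"
      by (rule continuous_on_divide[OF continuous_on_minus[OF continuous_on_diff]])
        (use assms in \<open>auto intro!: continuous_intros\<close>)
    fix b assume "b \<in> {s<..<t}"
    then have "k * b < k * t"
      using assms(1) by simp
    then have "0 < M - k * b"
      using assms(3) by linarith
    then have "(?G has_real_derivative
        - ((- k) * ln (M - k * b) + (M - k * b) * (- k / (M - k * b)) - (- k)) / k) (at b)"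
      by (auto intro!: derivative_eq_intros)
    moreover have "- ((- k) * ln (M - k * b) + (M - k * b) * (- k / (M - k * b)) - (- k)) / k
        = ln (M - k * b)"
      using \<open>0 < M - k * b\<close> assms by (simp add: field_simps)
    ultimately show "(?G has_vector_derivative ln (M - k * b)) (at b)"
      by (simp add: has_real_derivative_iff_has_vector_derivative)
  qed (use assms in simp)
  moreover have "?G t - ?G s
      = ((M - k * s) * ln (M - k * s) - (M - k * t) * ln (M - k * t)) / k - (t - s)"
    using assms by (simp add: field_simps)
  ultimately show ?thesis
    by simp
qed

lemma continuous_on_sqrt_ln: "continuous_on {0..} (\<lambda>y::real. sqrt y * ln y)"
  unfolding continuous_on_eq_continuous_within
proof
  fix y :: real assume "y \<in> {0..}"
  show "continuous (at y within {0..}) (\<lambda>y. sqrt y * ln y)"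
  proof (cases "y = 0")
    case True
    have "((\<lambda>y::real. sqrt y * ln y) \<longlongrightarrow> 0) (at_right 0)" by real_asymp
    then show ?thesis using True by (simp add: continuous_within at_within_Ici_at_right)
  next
    case False
    with \<open>y \<in> {0..}\<close> have "isCont (\<lambda>y. sqrt y * ln y) y"
      by (intro continuous_intros) auto
    then show ?thesis by (rule continuous_at_imp_continuous_within)
  qed
qed

lemma has_integral_fold_midpoint:
  fixes f :: "real \<Rightarrow> 'b::banach"
  assumes "(f has_integral I) {a..b}" "a \<le> b"
  shows "((\<lambda>x. f x + f (a + b - x)) has_integral I) {a..(a + b) / 2}"
proof -
  let ?m = "(a + b) / 2"
  have "f integrable_on {a..?m}" "f integrable_on {?m..b}"
    using assms by (auto intro: integrable_subinterval_real[OF has_integral_integrable])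
  then have left: "(f has_integral integral {a..?m} f) {a..?m}"
    and right: "(f has_integral integral {?m..b} f) {?m..b}"
    by (simp_all add: integrable_integral)
  have "(f has_integral integral {a..?m} f + integral {?m..b} f) {a..b}"
    using assms by (intro has_integral_combine[OF _ _ left right]) auto
  then have sum: "integral {a..?m} f + integral {?m..b} f = I"
    using assms(1) by (rule has_integral_unique)
  have "((\<lambda>x. f (a + b - x)) has_integral integral {?m..b} f) {a..?m}"
    by (rule has_integral_reflect_shift_real) (use right in \<open>simp add: field_simps\<close>)
  from has_integral_add[OF left this] show ?thesis
    unfolding sum .
qed

(* ln_chord t x = ln |1 - t e^(ix)|^2 *)
definition ln_chord :: "real \<Rightarrow> real \<Rightarrow> real" where
  "ln_chord t x = ln (1 - 2 * t * cos x + t\<^sup>2)"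

lemma chord_sq_eq:
  fixes t x :: real
  shows "1 - 2 * t * cos x + t\<^sup>2 = (t - cos x)\<^sup>2 + (sin x)\<^sup>2"
  using sin_cos_squared_add[of x] by (simp add: power2_diff algebra_simps)

lemma chord_sq_pos_interior:
  fixes t x :: real
  assumes "0 < x" "x < pi"
  shows "0 < 1 - 2 * t * cos x + t\<^sup>2"
  using sin_gt_zero[OF assms] unfolding chord_sq_eq
  by (simp add: add_nonneg_pos)

lemma chord_sq_bounds:
  fixes t x :: real
  shows "(1 - \<bar>t\<bar>)\<^sup>2 \<le> 1 - 2 * t * cos x + t\<^sup>2" "1 - 2 * t * cos x + t\<^sup>2 \<le> (1 + \<bar>t\<bar>)\<^sup>2"
proof -
  have "\<bar>t * cos x\<bar> \<le> \<bar>t\<bar>"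
    using abs_cos_le_one[of x] by (simp add: abs_mult mult_left_le)
  then have "- \<bar>t\<bar> \<le> t * cos x" "t * cos x \<le> \<bar>t\<bar>"
    by (simp_all add: abs_le_iff)
  then show "(1 - \<bar>t\<bar>)\<^sup>2 \<le> 1 - 2 * t * cos x + t\<^sup>2" "1 - 2 * t * cos x + t\<^sup>2 \<le> (1 + \<bar>t\<bar>)\<^sup>2"
    unfolding power2_diff power2_sum power2_abs by (simp_all add: mult.assoc)
qed

lemma chord_sq_pos:
  fixes t x :: real
  assumes "\<bar>t\<bar> < 1"
  shows "0 < 1 - 2 * t * cos x + t\<^sup>2"
proof -
  have "0 < (1 - \<bar>t\<bar>)\<^sup>2"
    using assms by simp
  then show ?thesis
    using chord_sq_bounds(1)[of t x] by linarith
qed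

lemma ln_chord_reflect_has_integral:
  assumes "(ln_chord t has_integral X) {0..pi}"
  shows "(ln_chord (-t) has_integral X) {0..pi}"
proof -
  have "((\<lambda>x. ln_chord t (pi - x)) has_integral X) {0..pi}"
    by (rule has_integral_reflect_shift_real) (use assms in simp)
  then show ?thesis by (simp add: ln_chord_def[abs_def])
qed

lemma ln_chord_duplication:
  assumes "0 < x" "x < pi"
  shows "ln_chord (t\<^sup>2) (2 * x) = ln_chord t x + ln_chord (-t) x"
proof -
  have "ln_chord t x + ln_chord (-t) x
      = ln ((1 - 2 * t * cos x + t\<^sup>2) * (1 - 2 * (-t) * cos x + (-t)\<^sup>2))"
    using chord_sq_pos_interior[OF assms, of t] chord_sq_pos_interior[OF assms, of "-t"]
    by (simp add: ln_chord_def ln_mult)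
  also have "(1 - 2 * t * cos x + t\<^sup>2) * (1 - 2 * (-t) * cos x + (-t)\<^sup>2)
      = 1 - 2 * t\<^sup>2 * cos (2 * x) + (t\<^sup>2)\<^sup>2"
    unfolding cos_double_cos by (simp add: power2_eq_square algebra_simps)
  finally show ?thesis by (simp add: ln_chord_def)
qed

lemma ln_chord_square_integral:
  assumes X: "(ln_chord t has_integral X) {0..pi}"
    and Y: "(ln_chord (t\<^sup>2) has_integral Y) {0..pi}"
  shows "Y = 2 * X"
proof -
  have sum: "((\<lambda>x. ln_chord t x + ln_chord (-t) x) has_integral X + X) {0..pi}"
    using has_integral_add[OF X ln_chord_reflect_has_integral[OF X]] .
  have half: "((\<lambda>x. ln_chord (t\<^sup>2) (2 * x)) has_integral X + X) {0..pi}"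
    by (rule has_integral_spike_finite[OF _ _ sum, of "{0, pi}"])
      (auto simp: ln_chord_duplication)
  have "((\<lambda>x. ln_chord (t\<^sup>2) (2 * pi - x)) has_integral Y) {pi..2 * pi}"
    by (rule has_integral_reflect_shift_real) (use Y in simp)
  then have "(ln_chord (t\<^sup>2) has_integral Y) {pi..2 * pi}"
    by (simp add: ln_chord_def[abs_def])
  then have "(ln_chord (t\<^sup>2) has_integral Y + Y) {0..2 * pi}"
    by (intro has_integral_combine[OF _ _ Y]) auto
  then have "((\<lambda>x. ln_chord (t\<^sup>2) (2 * x)) has_integral Y) {0..pi}"
    using has_integral_stretch_real[of "ln_chord (t\<^sup>2)" "Y + Y" 0 "2 * pi" 2]
    by (simp add: image_divide_atLeastAtMost)
  from has_integral_unique[OF half this] show ?thesis by simp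
qed

lemma abs_ln_chord_le:
  assumes "\<bar>t\<bar> \<le> 1/2"
  shows "\<bar>ln_chord t x\<bar> \<le> ln 4"
proof -
  have "(1/2)\<^sup>2 \<le> (1 - \<bar>t\<bar>)\<^sup>2" "(1 + \<bar>t\<bar>)\<^sup>2 \<le> 2\<^sup>2"
    using assms by (intro power_mono; simp)+
  then have "1/4 \<le> 1 - 2 * t * cos x + t\<^sup>2" "1 - 2 * t * cos x + t\<^sup>2 \<le> 4"
    using chord_sq_bounds[of t x] by (simp_all add: power2_eq_square)
  then have "ln (1/4) \<le> ln_chord t x" "ln_chord t x \<le> ln 4"
    unfolding ln_chord_def by (auto intro!: ln_mono)
  moreover have "ln (1/4 :: real) = - ln 4"
    by (simp add: ln_div)
  ultimately show ?thesis
    by linarith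
qed

lemma sin_ge_half:
  assumes "0 \<le> u" "u \<le> pi/2"
  shows "u/2 \<le> sin u"
proof -
  have "\<bar>sin u - (\<Sum>m<3. sin_coeff m * u^m)\<bar> \<le> inverse (fact 3) * \<bar>u\<bar>^3"
    by (rule Maclaurin_sin_bound)
  moreover have "(\<Sum>m<3. sin_coeff m * u^m) = u"
    by (simp add: sin_coeff_def numeral_3_eq_3 lessThan_Suc)
  moreover have "fact 3 = (6::real)"
    by (simp add: eval_nat_numeral)
  ultimately have "\<bar>sin u - u\<bar> \<le> u^3/6"
    using assms by simp
  then have "u - sin u \<le> u^3/6"
    by linarith
  moreover have "u \<le> 1.6"
    using assms pi_approx by simp
  then have "u * u \<le> 3"
    using mult_mono[of u "1.6" u "1.6"] assms by simp
  then have "u^3 \<le> 3 * u"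
    using assms by (simp add: power3_eq_cube mult_right_mono)
  ultimately show ?thesis by linarith
qed

lemma one_minus_cos_ge:
  assumes "0 \<le> x" "x \<le> pi"
  shows "x\<^sup>2 / 8 \<le> 1 - cos x"
proof -
  have "x/4 \<le> sin (x/2)"
    using sin_ge_half[of "x/2"] assms by simp
  then have "(x/4)\<^sup>2 \<le> (sin (x/2))\<^sup>2"
    using assms by (intro power_mono) auto
  then show ?thesis
    using cos_double_sin[of "x/2"] by (simp add: power2_eq_square)
qed

lemma abs_ln_chord_one_le:
  assumes "0 < x" "x \<le> pi"
  shows "\<bar>ln_chord 1 x\<bar> \<le> ln 4 + 2 * ln pi - 2 * ln x"
proof -
  have lower: "x\<^sup>2 / 4 \<le> 2 - 2 * cos x"
    using one_minus_cos_ge[of x] assms by simp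
  have upper: "2 - 2 * cos x \<le> 4"
    using cos_ge_minus_one[of x] by linarith
  have pos: "0 < x\<^sup>2 / 4"
    using assms by simp
  have "ln (x\<^sup>2 / 4) \<le> ln (2 - 2 * cos x)"
    by (rule ln_mono[OF lower pos])
  moreover have "ln (2 - 2 * cos x) \<le> ln 4"
    by (rule ln_mono[OF upper]) (use lower pos in linarith)
  moreover have "ln (x\<^sup>2 / 4) = 2 * ln x - ln 4"
    using assms by (simp add: ln_div ln_realpow)
  moreover have "ln_chord 1 x = ln (2 - 2 * cos x)"
    by (simp add: ln_chord_def)
  moreover have "ln x \<le> ln pi" "0 < ln pi" "0 < ln (4::real)"
    using assms pi_gt3 by auto
  ultimately show ?thesis
    by linarith
qed

lemma ln_chord_one_integrable: "ln_chord 1 integrable_on {0..pi}"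
proof (rule measurable_bounded_by_integrable_imp_integrable_real)
  have "ln_chord 1 \<in> borel_measurable lborel"
    unfolding ln_chord_def by measurable
  then show "ln_chord 1 \<in> borel_measurable (lebesgue_on {0..pi})"
    by (intro measurable_restrict_space1 measurable_completion)
  have "(ln has_integral pi * ln pi - pi) {0..pi}"
    using has_integral_ln[of 0 pi] by simp
  then show "(\<lambda>x. ln 4 + 2 * ln pi - 2 * ln x) integrable_on {0..pi}"
    by (intro integrable_diff integrable_add integrable_const_ivl integrable_on_cmult_left) auto
  show "\<bar>ln_chord 1 x\<bar> \<le> ln 4 + 2 * ln pi - 2 * ln x" if "x \<in> {0..pi}" for x
    using that abs_ln_chord_one_le[of x] pi_gt3 by (cases "x = 0") (auto simp: ln_chord_def)
qed simp

lemma ln_chord_integrable: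
  assumes "\<bar>t\<bar> \<le> 1"
  shows "ln_chord t integrable_on {0..pi}"
proof -
  consider "\<bar>t\<bar> < 1" | "t = 1" | "t = -1"
    using assms by linarith
  then show ?thesis
  proof cases
    case 1
    then have "continuous_on {0..pi} (ln_chord t)"
      unfolding ln_chord_def using chord_sq_pos[OF 1] by (intro continuous_intros) (auto simp: less_le)
    then show ?thesis
      by (rule integrable_continuous_interval)
  next
    case 3
    show ?thesis
      using ln_chord_reflect_has_integral[OF integrable_integral[OF ln_chord_one_integrable]] 3
      by blast
  qed (simp add: ln_chord_one_integrable)
qed

lemma integral_ln_chord_square:
  assumes "\<bar>t\<bar> \<le> 1"
  shows "integral {0..pi} (ln_chord (t\<^sup>2)) = 2 * integral {0..pi} (ln_chord t)"
proof -
  have "\<bar>t\<^sup>2\<bar> \<le> 1"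
    using assms by (simp add: abs_square_le_1)
  then show ?thesis
    using ln_chord_square_integral[OF integrable_integral integrable_integral] ln_chord_integrable assms
    by blast
qed

lemma integral_ln_chord_power2:
  assumes "\<bar>t\<bar> \<le> 1"
  shows "integral {0..pi} (ln_chord (t ^ 2 ^ k)) = 2 ^ k * integral {0..pi} (ln_chord t)"
proof (induction k)
  case (Suc k)
  have "\<bar>t ^ 2 ^ k\<bar> \<le> 1"
    using assms by (simp add: power_abs power_le_one)
  moreover have "t ^ 2 ^ Suc k = (t ^ 2 ^ k)\<^sup>2"
    by (simp add: power_mult[symmetric] mult.commute)
  ultimately show ?case
    using integral_ln_chord_square Suc.IH by simp
qed simp

lemma abs_integral_ln_chord_le:
  assumes "\<bar>t\<bar> \<le> 1/2"
  shows "\<bar>integral {0..pi} (ln_chord t)\<bar> \<le> ln 4 * pi"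
proof -
  have "(ln_chord t has_integral integral {0..pi} (ln_chord t)) (cbox 0 pi)"
    using assms by (simp add: integrable_integral ln_chord_integrable)
  then have "norm (integral {0..pi} (ln_chord t)) \<le> ln 4 * measure lborel (cbox 0 pi)"
    by (rule has_integral_bound[rotated]) (use assms abs_ln_chord_le in auto)
  then show ?thesis
    by simp
qed

(* For X(t) the integral of ln_chord t over [0, pi], X(t^(2^k)) = 2^k X(t) would be unbounded
   unless X(t) = 0, whereas X is bounded on [-1/2, 1/2]. *)
lemma integral_ln_chord_eq_0_interior:
  assumes "\<bar>t\<bar> < 1"
  shows "integral {0..pi} (ln_chord t) = 0"
proof (rule ccontr)
  let ?X = "\<lambda>t. integral {0..pi} (ln_chord t)"
  assume "?X t \<noteq> 0"
  have "(\<lambda>n. \<bar>t\<bar> ^ n) \<longlonglongrightarrow> 0"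
    using assms by (simp add: LIMSEQ_power_zero)
  then have "\<forall>\<^sub>F n in sequentially. \<bar>t\<bar> ^ n < 1/2"
    by (rule order_tendstoD(2)) simp
  then obtain N where N: "\<And>n. n \<ge> N \<Longrightarrow> \<bar>t\<bar> ^ n < 1/2"
    by (auto simp: eventually_sequentially)
  obtain k0 :: nat where k0: "ln 4 * pi / \<bar>?X t\<bar> < 2 ^ k0"
    using real_arch_pow[of 2 "ln 4 * pi / \<bar>?X t\<bar>"] by auto
  define k where "k = max k0 N"
  have "N \<le> k"
    by (simp add: k_def)
  then have "N \<le> 2 ^ k"
    using less_exp[of k] by linarith
  then have "\<bar>t ^ 2 ^ k\<bar> \<le> 1/2"
    using N[of "2 ^ k"] by (simp add: power_abs)
  then have "\<bar>?X (t ^ 2 ^ k)\<bar> \<le> ln 4 * pi"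
    by (rule abs_integral_ln_chord_le)
  then have "2 ^ k * \<bar>?X t\<bar> \<le> ln 4 * pi"
    using assms integral_ln_chord_power2[of t k] by (simp add: abs_mult)
  moreover have "2 ^ k0 * \<bar>?X t\<bar> \<le> 2 ^ k * \<bar>?X t\<bar>"
    by (intro mult_right_mono) (simp_all add: k_def)
  moreover have "ln 4 * pi < 2 ^ k0 * \<bar>?X t\<bar>"
    using k0 \<open>?X t \<noteq> 0\<close> by (simp add: field_simps)
  ultimately show False
    by linarith
qed

lemma has_integral_ln_chord:
  assumes "\<bar>t\<bar> \<le> 1"
  shows "(ln_chord t has_integral 0) {0..pi}"
proof -
  let ?X = "\<lambda>t. integral {0..pi} (ln_chord t)"
  have "?X t = 0"
  proof (cases "\<bar>t\<bar> = 1")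
    case True
    have "?X 1 = 2 * ?X 1"
      using integral_ln_chord_square[of 1] by simp
    moreover have "?X 1 = 2 * ?X t"
      using integral_ln_chord_square[OF assms] True by (simp add: power2_eq_1_iff abs_if split: if_splits)
    ultimately show ?thesis
      by simp
  qed (use assms integral_ln_chord_eq_0_interior in simp)
  then show ?thesis
    using integrable_integral[OF ln_chord_integrable[OF assms]] by simp
qed

lemma one_plus_cos_pos:
  assumes "0 \<le> x" "x < pi"
  shows "0 < 1 + cos x"
proof -
  have "0 < cos (x/2)"
    by (rule cos_gt_zero_pi) (use assms in auto)
  then show ?thesis
    using cos_double_cos[of "x/2"] by simp
qed

lemma has_integral_ln_one_plus_cos:
  "((\<lambda>x. ln (1 + cos x)) has_integral - pi * ln 2) {0..pi}"
proof -
  have hi: "((\<lambda>x. ln_chord (-1) x - ln 2) has_integral 0 - pi * ln 2) {0..pi}"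
    by (intro has_integral_diff has_integral_ln_chord has_integral_const_real[THEN has_integral_eq_rhs]) auto
  have eq: "ln (1 + cos x) = ln_chord (-1) x - ln 2" if "x \<in> {0..pi} - {pi}" for x
  proof -
    have "ln_chord (-1) x = ln (2 * (1 + cos x))"
      by (simp add: ln_chord_def)
    also have "\<dots> = ln 2 + ln (1 + cos x)"
      by (rule ln_mult_pos) (use one_plus_cos_pos[of x] that in auto)
    finally show ?thesis
      by simp
  qed
  show ?thesis
    using has_integral_spike_finite[of "{pi}", OF _ eq hi] by simp
qed

lemma has_integral_ln_five_plus_four_cos:
  "((\<lambda>x. ln (5 + 4 * cos x)) has_integral 2 * pi * ln 2) {0..pi}"
proof -
  have "((\<lambda>x. ln 4 + ln_chord (-1/2) x) has_integral pi * ln 4 + 0) {0..pi}"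
    by (intro has_integral_add has_integral_ln_chord has_integral_const_real[THEN has_integral_eq_rhs]) auto
  moreover have "ln 4 + ln_chord (-1/2) x = ln (5 + 4 * cos x)" for x
  proof -
    have "ln_chord (-1/2) x = ln ((5 + 4 * cos x) / 4)"
      by (simp add: ln_chord_def power2_eq_square add_divide_distrib)
    moreover have "0 < 5 + 4 * cos x"
      using cos_ge_minus_one[of x] by linarith
    ultimately show ?thesis
      by (simp add: ln_div)
  qed
  moreover have "ln (4::real) = 2 * ln 2"
    using ln_realpow[of 2 2] by simp
  ultimately show ?thesis
    by (simp add: mult_ac)
qed

section \<open>Archimedes' projection theorem in dimension four\<close>

lemma borel_measurable_fst [measurable]:
  "fst \<in> (borel :: ('a::topological_space \<times> 'b::topological_space) measure) \<rightarrow>\<^sub>M borel"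
  by (intro borel_measurable_continuous_onI continuous_on_fst continuous_on_id)

lemma borel_measurable_snd [measurable]:
  "snd \<in> (borel :: ('a::topological_space \<times> 'b::topological_space) measure) \<rightarrow>\<^sub>M borel"
  by (intro borel_measurable_continuous_onI continuous_on_snd continuous_on_id)

lemma emeasure_lborel_norm_sq_le:
  "emeasure (lborel :: (real \<times> real) measure) {v. (norm v)\<^sup>2 \<le> x} = ennreal (pi * max x 0)"
proof (cases "x < 0")
  case True
  then have empty: "{v::real \<times> real. (norm v)\<^sup>2 \<le> x} = {}"
    by (auto simp: not_le intro: less_le_trans[OF True])
  show ?thesis
    unfolding empty using True by simp
next
  case False
  have iff: "(norm v)\<^sup>2 \<le> x \<longleftrightarrow> norm v \<le> sqrt x" for v :: "real \<times> real"
  proof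
    assume "norm v \<le> sqrt x"
    then have "(norm v)\<^sup>2 \<le> (sqrt x)\<^sup>2"
      by (intro power_mono) auto
    then show "(norm v)\<^sup>2 \<le> x"
      using False by simp
  qed (rule real_le_rsqrt)
  have "{v::real \<times> real. (norm v)\<^sup>2 \<le> x} = cball 0 (sqrt x)"
    unfolding iff cball_def by (simp add: dist_norm norm_minus_commute[of 0])
  moreover have "emeasure lborel (cball (0::real \<times> real) (sqrt x)) = ennreal (unit_ball_vol 2 * (sqrt x)\<^sup>2)"
    using emeasure_cball[of "sqrt x" "0::real \<times> real"] False by simp
  ultimately show ?thesis
    using False by (simp add: unit_ball_vol_2)
qed

lemma distr_lborel_norm_sq:
  "distr (lborel :: (real \<times> real) measure) borel (\<lambda>v. (norm v)\<^sup>2)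
     = density lborel (\<lambda>t. ennreal pi * indicator {0..} t)"
  (is "?M = ?N")
proof (rule measure_eqI_generator_eq_countable[where E = "range atMost" and \<Omega> = UNIV
      and A = "range (\<lambda>n::nat. {..real n})"])
  have M: "emeasure ?M {..x} = ennreal (pi * max x 0)" for x
    by (subst emeasure_distr) (auto simp: emeasure_lborel_norm_sq_le vimage_def)
  have N: "emeasure ?N {..x} = ennreal (pi * max x 0)" for x :: real
  proof -
    have "emeasure ?N {..x} = (\<integral>\<^sup>+ t. ennreal pi * indicator {0..x} t \<partial>lborel)"
      by (subst emeasure_density) (auto intro!: nn_integral_cong split: split_indicator)
    also have "\<dots> = ennreal pi * emeasure lborel {0..x}"
      by (subst nn_integral_cmult_indicator) auto
    also have "\<dots> = ennreal (pi * max x 0)"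
      by (cases "0 \<le> x") (auto simp: ennreal_mult)
    finally show ?thesis .
  qed
  show "emeasure ?M X = emeasure ?N X" if "X \<in> range atMost" for X
    using that M N by auto
  show "sets ?M = sigma_sets UNIV (range atMost)" "sets ?N = sigma_sets UNIV (range atMost)"
    by (simp_all add: borel_eq_atMost sets_measure_of)
  show "emeasure ?M a \<noteq> \<infinity>" if "a \<in> range (\<lambda>n::nat. {..real n})" for a
    using that M by auto
qed (auto simp: Int_stable_def real_arch_simple)

lemma nn_integral_lborel_norm_sq:
  fixes \<phi> :: "real \<Rightarrow> ennreal"
  assumes [measurable]: "\<phi> \<in> borel_measurable borel"
  shows "(\<integral>\<^sup>+ v. \<phi> ((norm v)\<^sup>2) \<partial>(lborel :: (real \<times> real) measure))
           = ennreal pi * (\<integral>\<^sup>+ t. indicator {0..} t * \<phi> t \<partial>lborel)"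
proof -
  have "(\<integral>\<^sup>+ v. \<phi> ((norm v)\<^sup>2) \<partial>(lborel :: (real \<times> real) measure))
      = (\<integral>\<^sup>+ t. \<phi> t \<partial>density lborel (\<lambda>t. ennreal pi * indicator {0..} t))"
    by (simp add: nn_integral_distr distr_lborel_norm_sq[symmetric])
  also have "\<dots> = ennreal pi * (\<integral>\<^sup>+ t. indicator {0..} t * \<phi> t \<partial>lborel)"
    by (simp add: nn_integral_density nn_integral_cmult mult.assoc)
  finally show ?thesis .
qed

lemma nn_integral_lborel_scale:
  fixes f :: "'a::euclidean_space \<Rightarrow> ennreal"
  assumes [measurable]: "f \<in> borel_measurable borel" and "0 < c"
  shows "(\<integral>\<^sup>+ u. f u \<partial>lborel) = ennreal (c ^ DIM('a)) * (\<integral>\<^sup>+ z. f (c *\<^sub>R z) \<partial>lborel)"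
proof -
  have "(\<integral>\<^sup>+ u. f u \<partial>lborel)
      = (\<integral>\<^sup>+ u. f u \<partial>density (distr lborel borel (\<lambda>x. 0 + c *\<^sub>R x)) (\<lambda>_. \<bar>c\<bar> ^ DIM('a)))"
    using lborel_affine[of c "0::'a"] assms(2) by simp
  also have "\<dots> = (\<integral>\<^sup>+ z. ennreal (c ^ DIM('a)) * f (c *\<^sub>R z) \<partial>lborel)"
    using assms(2) by (subst nn_integral_density) (auto simp: nn_integral_distr)
  also have "\<dots> = ennreal (c ^ DIM('a)) * (\<integral>\<^sup>+ z. f (c *\<^sub>R z) \<partial>lborel)"
    by (subst nn_integral_cmult) auto
  finally show ?thesis .
qed

lemma nn_integral_lborel_prod_assoc:
  fixes F :: "'a::euclidean_space \<times> 'b::euclidean_space \<times> 'c::euclidean_space \<Rightarrow> ennreal"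
  assumes [measurable]: "F \<in> borel_measurable borel"
  shows "(\<integral>\<^sup>+ x. F x \<partial>lborel) = (\<integral>\<^sup>+ u. (\<integral>\<^sup>+ v. F (fst u, snd u, v) \<partial>lborel) \<partial>lborel)"
proof -
  have fubini: "(\<integral>\<^sup>+ x. G x \<partial>lborel) = (\<integral>\<^sup>+ a. (\<integral>\<^sup>+ y. G (a, y) \<partial>lborel) \<partial>lborel)"
    if [measurable]: "G \<in> borel_measurable borel"
    for G :: "'d::euclidean_space \<times> 'e::euclidean_space \<Rightarrow> ennreal"
  proof -
    have "(\<integral>\<^sup>+ x. G x \<partial>lborel) = integral\<^sup>N (lborel \<Otimes>\<^sub>M lborel) G"
      by (simp add: lborel_prod)
    also have "\<dots> = (\<integral>\<^sup>+ a. (\<integral>\<^sup>+ y. G (a, y) \<partial>lborel) \<partial>lborel)"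
      by (rule lborel.nn_integral_fst[symmetric]) (simp add: lborel_prod)
    finally show ?thesis .
  qed
  have "(\<lambda>p::('a \<times> 'b) \<times> 'c. (fst (fst p), snd (fst p), snd p)) \<in> borel \<rightarrow>\<^sub>M borel"
    by (intro borel_measurable_continuous_onI continuous_intros)
  from measurable_comp[OF this, of F borel]
  have "(\<lambda>p. F (fst (fst p), snd (fst p), snd p)) \<in> borel_measurable (lborel \<Otimes>\<^sub>M lborel)"
    unfolding lborel_prod by (simp add: comp_def)
  from lborel.borel_measurable_nn_integral_fst[OF this]
  have [measurable]: "(\<lambda>u. \<integral>\<^sup>+ v. F (fst u, snd u, v) \<partial>lborel) \<in> borel_measurable borel"
    by simp
  have "(\<integral>\<^sup>+ x. F x \<partial>lborel) = (\<integral>\<^sup>+ a. (\<integral>\<^sup>+ y. F (a, y) \<partial>lborel) \<partial>lborel)"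
    by (rule fubini) simp
  also have "\<dots> = (\<integral>\<^sup>+ a. (\<integral>\<^sup>+ b. (\<integral>\<^sup>+ v. F (a, b, v) \<partial>lborel) \<partial>lborel) \<partial>lborel)"
    by (intro nn_integral_cong fubini) simp
  also have "\<dots> = (\<integral>\<^sup>+ u. (\<integral>\<^sup>+ v. F (fst u, snd u, v) \<partial>lborel) \<partial>lborel)"
    using fubini[of "\<lambda>u. \<integral>\<^sup>+ v. F (fst u, snd u, v) \<partial>lborel"] by simp
  finally show ?thesis .
qed

lemma nn_integral_radial_slice:
  fixes h :: "real \<times> real \<Rightarrow> ennreal" and u :: "real \<times> real"
  assumes [measurable]: "h \<in> borel_measurable borel"
  shows "(\<integral>\<^sup>+ v. (if (norm u)\<^sup>2 + (norm v)\<^sup>2 < 1 then h (u /\<^sub>R sqrt ((norm u)\<^sup>2 + (norm v)\<^sup>2)) else 0)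
            \<partial>(lborel :: (real \<times> real) measure))
       = ennreal pi * (\<integral>\<^sup>+ w. (if (norm u)\<^sup>2 \<le> w \<and> w < 1 then h (u /\<^sub>R sqrt w) else 0) \<partial>lborel)"
proof -
  let ?s = "(norm u)\<^sup>2"
  let ?\<phi> = "\<lambda>t. if ?s + t < 1 then h (u /\<^sub>R sqrt (?s + t)) else 0"
  have "(\<integral>\<^sup>+ t. indicator {0..} t * ?\<phi> t \<partial>lborel)
      = (\<integral>\<^sup>+ w. indicator {0..} (- ?s + 1 * w) * ?\<phi> (- ?s + 1 * w) \<partial>lborel)"
    by (subst nn_integral_real_affine[of _ 1 "- ?s"]) simp_all
  also have "\<dots> = (\<integral>\<^sup>+ w. (if ?s \<le> w \<and> w < 1 then h (u /\<^sub>R sqrt w) else 0) \<partial>lborel)"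
    by (intro nn_integral_cong) (auto split: split_indicator)
  finally show ?thesis
    using nn_integral_lborel_norm_sq[of ?\<phi>] by simp
qed

lemma nn_integral_scaled_disc:
  fixes h :: "real \<times> real \<Rightarrow> ennreal"
  assumes [measurable]: "h \<in> borel_measurable borel" and "0 < w" "w < 1"
  shows "(\<integral>\<^sup>+ u. (if (norm u)\<^sup>2 \<le> w \<and> w < 1 then h (u /\<^sub>R sqrt w) else 0) \<partial>lborel)
       = ennreal w * (\<integral>\<^sup>+ z. indicator (cball 0 1) z * h z \<partial>lborel)"
proof -
  let ?f = "\<lambda>u::real \<times> real. if (norm u)\<^sup>2 \<le> w \<and> w < 1 then h (u /\<^sub>R sqrt w) else 0"
  have "(\<integral>\<^sup>+ u. ?f u \<partial>lborel) = ennreal ((sqrt w) ^ DIM(real \<times> real)) * (\<integral>\<^sup>+ z. ?f (sqrt w *\<^sub>R z) \<partial>lborel)"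
    using assms by (intro nn_integral_lborel_scale) auto
  moreover have "?f (sqrt w *\<^sub>R z) = indicator (cball 0 1) z * h z" for z
  proof -
    have "(norm (sqrt w *\<^sub>R z))\<^sup>2 \<le> w \<longleftrightarrow> norm z \<le> 1"
      using assms by (simp add: power_mult_distrib power_le_one_iff)
    then show ?thesis
      using assms by (simp add: indicator_def dist_norm)
  qed
  ultimately show ?thesis
    using assms by simp
qed

lemma nn_integral_id_01: "(\<integral>\<^sup>+ w. ennreal w * indicator {0<..<1} w \<partial>lborel) = ennreal (1/2)"
proof -
  have "((\<lambda>w::real. w) has_integral 1\<^sup>2 / 2 - 0\<^sup>2 / 2) {0..1}"
    by (rule fundamental_theorem_of_calculus)
      (auto intro!: derivative_eq_intros simp: has_real_derivative_iff_has_vector_derivative[symmetric])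
  then have "((\<lambda>w::real. w) has_integral 1/2) {0<..<1}"
    using has_integral_open_interval[of "\<lambda>w::real. w" "1/2" 0 1] by simp
  then show ?thesis
    by (rule nn_integral_has_integral_lebesgue'[rotated]) auto
qed

lemma borel_measurable_normalized_proj2 [measurable]:
  "(\<lambda>x::quat. (fst x, fst (snd x)) /\<^sub>R norm x) \<in> borel \<rightarrow>\<^sub>M borel"
proof -
  have "(\<lambda>x::quat. (fst x, fst (snd x)) /\<^sub>R norm x) = (\<lambda>x. (fst x / norm x, fst (snd x) / norm x))"
    by (auto simp: divide_inverse mult.commute)
  moreover have "(\<lambda>x::quat. (fst x / norm x, fst (snd x) / norm x)) \<in> borel \<rightarrow>\<^sub>M borel"
    by measurable
  ultimately show ?thesis
    by simp
qed

lemma nn_integral_unit_ball_quat_slices: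
  fixes h :: "real \<times> real \<Rightarrow> ennreal"
  assumes [measurable]: "h \<in> borel_measurable borel"
  shows "(\<integral>\<^sup>+ x. indicator (ball 0 1) x * h ((fst x, fst (snd x)) /\<^sub>R norm x) \<partial>(lborel :: quat measure))
       = (\<integral>\<^sup>+ u. (\<integral>\<^sup>+ v. (if (norm u)\<^sup>2 + (norm v)\<^sup>2 < 1
            then h (u /\<^sub>R sqrt ((norm u)\<^sup>2 + (norm v)\<^sup>2)) else 0) \<partial>(lborel :: (real \<times> real) measure)) \<partial>lborel)"
proof (subst nn_integral_lborel_prod_assoc)
  have [measurable]: "ball (0::quat) 1 \<in> sets borel"
    by simp
  show "(\<lambda>x::quat. indicator (ball 0 1) x * h ((fst x, fst (snd x)) /\<^sub>R norm x)) \<in> borel_measurable borel"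
    by measurable
  have "indicator (ball 0 1) (fst u, snd u, v) * h (u /\<^sub>R norm (fst u, snd u, v))
      = (if (norm u)\<^sup>2 + (norm v)\<^sup>2 < 1 then h (u /\<^sub>R sqrt ((norm u)\<^sup>2 + (norm v)\<^sup>2)) else 0)"
    for u v :: "real \<times> real"
  proof -
    have norm: "norm (fst u, snd u, v) = sqrt ((norm u)\<^sup>2 + (norm v)\<^sup>2)"
      by (cases u) (simp add: norm_Pair add.assoc)
    then have "(fst u, snd u, v) \<in> ball 0 1 \<longleftrightarrow> (norm u)\<^sup>2 + (norm v)\<^sup>2 < 1"
      by (simp add: mem_ball_0 real_sqrt_lt_1_iff)
    then show ?thesis
      using norm by (simp add: indicator_def)
  qed
  then show "(\<integral>\<^sup>+ u. (\<integral>\<^sup>+ v. indicator (ball (0::quat) 1) (fst u, snd u, v)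
        * h ((fst (fst u, snd u, v), fst (snd (fst u, snd u, v))) /\<^sub>R norm (fst u, snd u, v)) \<partial>lborel) \<partial>lborel)
      = (\<integral>\<^sup>+ u. (\<integral>\<^sup>+ v. (if (norm u)\<^sup>2 + (norm v)\<^sup>2 < 1
            then h (u /\<^sub>R sqrt ((norm u)\<^sup>2 + (norm v)\<^sup>2)) else 0) \<partial>(lborel :: (real \<times> real) measure)) \<partial>lborel)"
    by (intro nn_integral_cong) simp
qed

lemma nn_integral_disc_slices:
  fixes h :: "real \<times> real \<Rightarrow> ennreal"
  assumes [measurable]: "h \<in> borel_measurable borel"
  shows "(\<integral>\<^sup>+ w. (\<integral>\<^sup>+ u. (if (norm u)\<^sup>2 \<le> w \<and> w < 1 then h (u /\<^sub>R sqrt w) else 0)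
            \<partial>(lborel :: (real \<times> real) measure)) \<partial>lborel)
       = ennreal (1/2) * (\<integral>\<^sup>+ z. indicator (cball 0 1) z * h z \<partial>lborel)"
proof -
  let ?K = "\<integral>\<^sup>+ z. indicator (cball 0 1) z * h z \<partial>lborel"
  have "AE w in lborel. (\<integral>\<^sup>+ u. (if (norm u)\<^sup>2 \<le> w \<and> w < 1 then h (u /\<^sub>R sqrt w) else 0)
      \<partial>(lborel :: (real \<times> real) measure)) = ennreal w * indicator {0<..<1} w * ?K"
    using AE_lborel_singleton[of 0]
  proof eventually_elim
    case (elim w)
    show ?case
    proof (cases "0 < w \<and> w < 1")
      case True
      then show ?thesis
        using nn_integral_scaled_disc[OF assms, of w] by simp
    next
      case False
      have outside: "\<not> ((norm u)\<^sup>2 \<le> w \<and> w < 1)" for u :: "real \<times> real"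
        using zero_le_power2[of "norm u"] elim False by linarith
      have "(if (norm u)\<^sup>2 \<le> w \<and> w < 1 then h (u /\<^sub>R sqrt w) else 0) = 0" for u :: "real \<times> real"
        using outside[of u] by auto
      with False show ?thesis
        by simp
    qed
  qed
  then have "(\<integral>\<^sup>+ w. (\<integral>\<^sup>+ u. (if (norm u)\<^sup>2 \<le> w \<and> w < 1 then h (u /\<^sub>R sqrt w) else 0)
      \<partial>(lborel :: (real \<times> real) measure)) \<partial>lborel) = (\<integral>\<^sup>+ w. ennreal w * indicator {0<..<1} w * ?K \<partial>lborel)"
    by (rule nn_integral_cong_AE)
  also have "\<dots> = ennreal (1/2) * ?K"
    by (simp add: nn_integral_multc nn_integral_id_01)
  finally show ?thesis .
qed

(* Integrate out the last two coordinates in polar form; after the substitution w = |x|^2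
   the slices of fixed w are copies of the unit disc scaled by sqrt w, of area pi * w. *)
lemma nn_integral_unit_ball_proj2:
  fixes h :: "real \<times> real \<Rightarrow> ennreal"
  assumes [measurable]: "h \<in> borel_measurable borel"
  shows "(\<integral>\<^sup>+ x. indicator (ball 0 1) x * h ((fst x, fst (snd x)) /\<^sub>R norm x) \<partial>(lborel :: quat measure))
       = ennreal (pi / 2) * (\<integral>\<^sup>+ z. indicator (cball 0 1) z * h z \<partial>lborel)"
proof -
  define \<Psi> where "\<Psi> u w = (if (norm u)\<^sup>2 \<le> w \<and> w < 1 then h (u /\<^sub>R sqrt w) else 0)"
    for u :: "real \<times> real" and w :: real
  have \<Psi>_meas: "case_prod \<Psi> \<in> borel_measurable (lborel \<Otimes>\<^sub>M lborel)"
    unfolding \<Psi>_def by measurable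
  have "(\<integral>\<^sup>+ x. indicator (ball 0 1) x * h ((fst x, fst (snd x)) /\<^sub>R norm x) \<partial>(lborel :: quat measure))
      = (\<integral>\<^sup>+ u. ennreal pi * (\<integral>\<^sup>+ w. \<Psi> u w \<partial>lborel) \<partial>lborel)"
    unfolding nn_integral_unit_ball_quat_slices[OF assms] \<Psi>_def by (simp add: nn_integral_radial_slice)
  also have "\<dots> = ennreal pi * (\<integral>\<^sup>+ w. (\<integral>\<^sup>+ u. \<Psi> u w \<partial>lborel) \<partial>lborel)"
    using lborel.borel_measurable_nn_integral_fst[OF \<Psi>_meas]
    by (simp add: nn_integral_cmult lborel_pair.Fubini'[OF \<Psi>_meas])
  also have "\<dots> = ennreal pi * ennreal (1/2) * (\<integral>\<^sup>+ z. indicator (cball 0 1) z * h z \<partial>lborel)"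
    unfolding \<Psi>_def by (simp add: nn_integral_disc_slices mult.assoc)
  also have "ennreal pi * ennreal (1/2) = ennreal (pi / 2)"
    by (subst ennreal_mult[symmetric]) auto
  finally show ?thesis .
qed

lemma emeasure_unit_ball_quat: "emeasure lborel (ball (0::quat) 1) = ennreal (pi\<^sup>2 / 2)"
  using emeasure_ball[of 1 "0::quat"] by (simp add: unit_ball_vol_4)

lemma prob_space_haar_S3: "prob_space haar_S3"
  unfolding haar_S3_def
  by (intro prob_space.prob_space_distr prob_space_uniform_measure) (auto simp: emeasure_unit_ball_quat)

lemma AE_haar_S3_norm_eq_1: "AE y in haar_S3. norm y = 1"
proof -
  have "AE x in lborel. x \<in> ball (0::quat) 1 \<longrightarrow> norm (x /\<^sub>R norm x) = 1"
    using AE_lborel_singleton[of "0::quat"] by eventually_elim simp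
  then show ?thesis
    unfolding haar_S3_def by (subst AE_distr_iff) (auto intro: AE_uniform_measureI)
qed

lemma nn_integral_haar_S3_proj2:
  fixes h :: "real \<times> real \<Rightarrow> ennreal"
  assumes [measurable]: "h \<in> borel_measurable borel"
  shows "(\<integral>\<^sup>+ y. h (fst y, fst (snd y)) \<partial>haar_S3)
       = ennreal (1 / pi) * (\<integral>\<^sup>+ z. indicator (cball 0 1) z * h z \<partial>lborel)"
proof -
  let ?K = "\<integral>\<^sup>+ z. indicator (cball 0 1) z * h z \<partial>lborel"
  have "(\<integral>\<^sup>+ y. h (fst y, fst (snd y)) \<partial>haar_S3)
      = (\<integral>\<^sup>+ x. h ((fst x, fst (snd x)) /\<^sub>R norm x) \<partial>uniform_measure lborel (ball (0::quat) 1))"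
    unfolding haar_S3_def by (subst nn_integral_distr) simp_all
  also have "\<dots> = (\<integral>\<^sup>+ x. indicator (ball 0 1) x * h ((fst x, fst (snd x)) /\<^sub>R norm x) \<partial>(lborel :: quat measure))
      / emeasure lborel (ball (0::quat) 1)"
    by (subst nn_integral_uniform_measure) (simp_all add: mult.commute)
  also have "\<dots> = ennreal (pi / 2) * ?K / ennreal (pi\<^sup>2 / 2)"
    by (simp only: nn_integral_unit_ball_proj2[OF assms] emeasure_unit_ball_quat)
  also have "\<dots> = ennreal (1 / pi) * ?K"
  proof -
    have "ennreal (pi / 2) / ennreal (pi\<^sup>2 / 2) = ennreal (1 / pi)"
      by (subst divide_ennreal) (auto simp: power2_eq_square)
    moreover have "ennreal (pi / 2) * ?K / ennreal (pi\<^sup>2 / 2) = ennreal (pi / 2) / ennreal (pi\<^sup>2 / 2) * ?K"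
      by (simp only: ennreal_divide_times ennreal_times_divide)
    ultimately show ?thesis
      by simp
  qed
  finally show ?thesis .
qed

section \<open>A trigonometric integral\<close>

(* circ_poly y = (1 + y) (5 + 4 y) is half of 18 - 18 b - 8 a^2 at the point (a, b) = (sqrt (1 - y^2), - y)
   of the unit circle. *)
definition circ_poly :: "real \<Rightarrow> real" where
  "circ_poly y = 4 * y\<^sup>2 + 9 * y + 5"

definition circ_ent :: "real \<Rightarrow> real" where
  "circ_ent y = circ_poly y * ln (circ_poly y)"

(* trig_Q' = cos * circ_poly (cos) - 9/2; integrating by parts against ln (1 + cos) and ln (5 + 4 cos)
   leaves integrands with the elementary antiderivatives trig_R1 and trig_R2, where trig_A' = 1 / (5 + 4 cos).
   The remaining 9/2 times the logarithms is covered by the classical integrals. *)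
definition trig_r :: "real \<Rightarrow> real" where
  "trig_r c = 4/3 * c\<^sup>2 + 9/2 * c + 23/3"

definition trig_Q :: "real \<Rightarrow> real" where
  "trig_Q x = sin x * trig_r (cos x)"

definition trig_R1 :: "real \<Rightarrow> real" where
  "trig_R1 x = - 4/3 * (sin x - (sin x)^3 / 3) - 19/6 * (x/2 + sin x * cos x / 2)
     - 19/6 * sin x + 23/3 * x"

definition trig_A :: "real \<Rightarrow> real" where
  "trig_A x = x/3 - 2/3 * arctan (sin x / (2 + cos x))"

definition trig_R2 :: "real \<Rightarrow> real" where
  "trig_R2 x = - 4/3 * (sin x - (sin x)^3 / 3) - 17/6 * (x/2 + sin x * cos x / 2)
     - 67/24 * sin x + 767/96 * x - 297/32 * trig_A x"

lemma sin_times_sin: "sin x * sin x = 1 - cos x * cos (x::real)"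
  using sin_squared_eq[of x] by (simp add: power2_eq_square)

lemma five_plus_four_cos_pos: "0 < 5 + 4 * cos (x::real)"
  using cos_ge_minus_one[of x] by linarith

lemma has_real_derivative_trig_Q:
  "(trig_Q has_real_derivative cos x * circ_poly (cos x) - 9/2) (at x)"
proof -
  have "(trig_Q has_real_derivative
          cos x * trig_r (cos x) + sin x * ((8/3 * cos x + 9/2) * (- sin x))) (at x)"
    unfolding trig_Q_def trig_r_def
    by (auto intro!: derivative_eq_intros simp: power2_eq_square field_simps)
  moreover have "cos x * trig_r (cos x) + sin x * ((8/3 * cos x + 9/2) * (- sin x))
      = cos x * circ_poly (cos x) - 9/2"
    unfolding trig_r_def circ_poly_def using sin_times_sin[of x] by algebra
  ultimately show ?thesis
    by simp
qed

lemma has_real_derivative_trig_R1: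
  "(trig_R1 has_real_derivative (1 - cos x) * trig_r (cos x)) (at x)"
proof -
  have "(trig_R1 has_real_derivative - 4/3 * (cos x - (sin x)\<^sup>2 * cos x)
          - 19/6 * (1/2 + (cos x * cos x - sin x * sin x) / 2) - 19/6 * cos x + 23/3) (at x)"
    unfolding trig_R1_def by (auto intro!: derivative_eq_intros simp: power2_eq_square field_simps)
  moreover have "- 4/3 * (cos x - (sin x)\<^sup>2 * cos x)
      - 19/6 * (1/2 + (cos x * cos x - sin x * sin x) / 2) - 19/6 * cos x + 23/3
      = (1 - cos x) * trig_r (cos x)"
    unfolding trig_r_def using sin_times_sin[of x] by algebra
  ultimately show ?thesis
    by simp
qed

lemma has_real_derivative_trig_A:
  "(trig_A has_real_derivative 1 / (5 + 4 * cos x)) (at x)"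
proof -
  have pos: "0 < 2 + cos x"
    using cos_ge_minus_one[of x] by linarith
  let ?u' = "(cos x * (2 + cos x) - sin x * (0 + - sin x)) / ((2 + cos x) * (2 + cos x))"
  have "((\<lambda>x. sin x / (2 + cos x)) has_real_derivative ?u') (at x)"
    by (rule DERIV_divide[OF DERIV_sin DERIV_add[OF DERIV_const DERIV_cos]]) (use pos in auto)
  then have "((\<lambda>x. arctan (sin x / (2 + cos x))) has_real_derivative
      inverse (1 + (sin x / (2 + cos x))\<^sup>2) * ?u') (at x)"
    by (rule DERIV_chain2[OF DERIV_arctan])
  moreover have "((\<lambda>x. x / 3) has_real_derivative 1/3) (at x)"
    by (auto intro!: derivative_eq_intros)
  ultimately have "(trig_A has_real_derivative
      1/3 - 2/3 * (inverse (1 + (sin x / (2 + cos x))\<^sup>2) * ?u')) (at x)"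
    unfolding trig_A_def by (intro DERIV_diff DERIV_cmult)
  moreover have "1/3 - 2/3 * (inverse (1 + (sin x / (2 + cos x))\<^sup>2) * ?u') = 1 / (5 + 4 * cos x)"
  proof -
    have "(2 + cos x)\<^sup>2 + (sin x)\<^sup>2 = 5 + 4 * cos x"
      using sin_times_sin[of x] by algebra
    then have e1: "1 + (sin x / (2 + cos x))\<^sup>2 = (5 + 4 * cos x) / (2 + cos x)\<^sup>2"
      using pos by (simp add: power_divide field_simps)
    have e2: "cos x * (2 + cos x) - sin x * (0 + - sin x) = 1 + 2 * cos x"
      using sin_times_sin[of x] by algebra
    have e3: "inverse ((5 + 4 * cos x) / (2 + cos x)\<^sup>2) * ((1 + 2 * cos x) / ((2 + cos x) * (2 + cos x)))
        = (1 + 2 * cos x) / (5 + 4 * cos x)"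
    proof -
      have "inverse (e / d\<^sup>2) * (n / (d * d)) = n / e" if "d \<noteq> 0" "e \<noteq> 0" for d e n :: real
        using that by (simp add: field_simps power2_eq_square)
      then show ?thesis
        using pos five_plus_four_cos_pos[of x] by simp
    qed
    show ?thesis
      unfolding e1 e2 e3 using five_plus_four_cos_pos[of x] by (simp add: field_simps)
  qed
  ultimately show ?thesis
    by simp
qed

lemma has_real_derivative_trig_R2:
  "(trig_R2 has_real_derivative 4 * sin x * trig_Q x / (5 + 4 * cos x)) (at x)"
proof -
  let ?E = "- 4/3 * (cos x - (sin x)\<^sup>2 * cos x) - 17/6 * (1/2 + (cos x * cos x - sin x * sin x) / 2)
    - 67/24 * cos x + 767/96"
  have "(trig_R2 has_real_derivative ?E - 297/32 * (1 / (5 + 4 * cos x))) (at x)"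
    unfolding trig_R2_def using five_plus_four_cos_pos[of x]
    by (auto intro!: derivative_eq_intros has_real_derivative_trig_A simp: power2_eq_square field_simps)
  moreover have "?E * (5 + 4 * cos x) - 297/32 = 4 * sin x * trig_Q x"
    unfolding trig_Q_def trig_r_def using sin_times_sin[of x] by algebra
  then have "?E - 297/32 * (1 / (5 + 4 * cos x)) = 4 * sin x * trig_Q x / (5 + 4 * cos x)"
    using five_plus_four_cos_pos[of x] by (simp add: field_simps)
  ultimately show ?thesis
    by simp
qed

lemma has_integral_trig_Q'_ln_five_plus_four_cos:
  "((\<lambda>x. (cos x * circ_poly (cos x) - 9/2) * ln (5 + 4 * cos x)) has_integral 167 * pi / 48) {0..pi}"
proof -
  let ?F = "\<lambda>x. trig_Q x * ln (5 + 4 * cos x) + trig_R2 x"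
  have F': "(?F has_real_derivative (cos x * circ_poly (cos x) - 9/2) * ln (5 + 4 * cos x)) (at x)" for x
  proof -
    have "((\<lambda>x. ln (5 + 4 * cos x)) has_real_derivative - 4 * sin x / (5 + 4 * cos x)) (at x)"
      using five_plus_four_cos_pos[of x] by (auto intro!: derivative_eq_intros simp: field_simps)
    from DERIV_add[OF DERIV_mult[OF has_real_derivative_trig_Q this] has_real_derivative_trig_R2]
    show ?thesis
      by (simp add: field_simps)
  qed
  have hi: "((\<lambda>x. (cos x * circ_poly (cos x) - 9/2) * ln (5 + 4 * cos x)) has_integral ?F pi - ?F 0) {0..pi}"
  proof (rule fundamental_theorem_of_calculus_interior)
    show "continuous_on {0..pi} ?F"
      using F' by (intro continuous_at_imp_continuous_on ballI DERIV_isCont) auto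
  qed (use F' in \<open>auto simp: has_real_derivative_iff_has_vector_derivative[symmetric]\<close>)
  have "?F pi - ?F 0 = 167 * pi / 48"
    by (simp add: trig_Q_def trig_R2_def trig_A_def)
  with hi show ?thesis
    by (simp only:)
qed

(* At x = pi the logarithm is singular, but sin x = sqrt (1 - cos x) * sqrt (1 + cos x) tames it. *)
lemma continuous_on_trig_Q_ln_one_plus_cos:
  "continuous_on {0..pi} (\<lambda>x. trig_Q x * ln (1 + cos x))"
proof -
  have "0 \<le> 1 + cos x" for x :: real
    using cos_ge_minus_one[of x] by linarith
  then have c1: "continuous_on {0..pi} (\<lambda>x. sqrt (1 + cos x) * ln (1 + cos x))"
    by (intro continuous_on_compose2[OF continuous_on_sqrt_ln, of _ "\<lambda>x. 1 + cos x"])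
      (auto intro!: continuous_intros)
  have c2: "continuous_on {0..pi} (\<lambda>x. trig_r (cos x))" "continuous_on {0..pi} (\<lambda>x. sqrt (1 - cos x))"
    unfolding trig_r_def by (intro continuous_intros; simp)+
  have cont: "continuous_on {0..pi}
      (\<lambda>x. trig_r (cos x) * (sqrt (1 - cos x) * (sqrt (1 + cos x) * ln (1 + cos x))))"
    by (rule continuous_on_mult[OF c2(1) continuous_on_mult[OF c2(2) c1]])
  have sin_eq: "sin x = sqrt (1 - cos x) * sqrt (1 + cos x)" if "x \<in> {0..pi}" for x
  proof -
    have "sin x = sqrt ((sin x)\<^sup>2)"
      using sin_ge_zero[of x] that by simp
    also have "(sin x)\<^sup>2 = (1 - cos x) * (1 + cos x)"
      using sin_times_sin[of x] by (simp add: power2_eq_square algebra_simps)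
    finally show ?thesis
      by (simp add: real_sqrt_mult)
  qed
  show ?thesis
    by (rule continuous_on_eq[OF cont]) (simp add: trig_Q_def sin_eq mult_ac)
qed

lemma has_integral_trig_Q'_ln_one_plus_cos:
  "((\<lambda>x. (cos x * circ_poly (cos x) - 9/2) * ln (1 + cos x)) has_integral 73 * pi / 12) {0..pi}"
proof -
  let ?F = "\<lambda>x. trig_Q x * ln (1 + cos x) + trig_R1 x"
  have "continuous_on {0..pi} trig_R1"
    unfolding trig_R1_def by (intro continuous_intros) auto
  then have "continuous_on {0..pi} ?F"
    by (intro continuous_on_add continuous_on_trig_Q_ln_one_plus_cos)
  then have "((\<lambda>x. (cos x * circ_poly (cos x) - 9/2) * ln (1 + cos x)) has_integral ?F pi - ?F 0) {0..pi}"
  proof (rule fundamental_theorem_of_calculus_interior[rotated])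
    fix x assume "x \<in> {0<..<pi}"
    then have pos: "0 < 1 + cos x"
      using one_plus_cos_pos[of x] by auto
    have "((\<lambda>x. ln (1 + cos x)) has_real_derivative - sin x / (1 + cos x)) (at x)"
      using pos by (auto intro!: derivative_eq_intros simp: field_simps)
    then have "(?F has_real_derivative (cos x * circ_poly (cos x) - 9/2) * ln (1 + cos x)
        + - sin x / (1 + cos x) * trig_Q x + (1 - cos x) * trig_r (cos x)) (at x)"
      by (rule DERIV_add[OF DERIV_mult[OF has_real_derivative_trig_Q] has_real_derivative_trig_R1])
    moreover have "trig_Q x * sin x = (1 - cos x) * trig_r (cos x) * (1 + cos x)"
      unfolding trig_Q_def using sin_times_sin[of x] by algebra
    then have "- sin x / (1 + cos x) * trig_Q x + (1 - cos x) * trig_r (cos x) = 0"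
      using pos by (simp add: field_simps)
    ultimately show "(?F has_vector_derivative (cos x * circ_poly (cos x) - 9/2) * ln (1 + cos x)) (at x)"
      by (simp add: has_real_derivative_iff_has_vector_derivative)
  qed simp
  moreover have "?F pi - ?F 0 = 73 * pi / 12"
    by (simp add: trig_Q_def trig_R1_def)
  ultimately show ?thesis
    by (simp only:)
qed

lemma has_integral_cos_circ_ent:
  "((\<lambda>x. cos x * circ_ent (cos x)) has_integral 459 * pi / 48 + 9/2 * pi * ln 2) {0..pi}"
proof -
  let ?q = "\<lambda>x. cos x * circ_poly (cos x) - 9/2"
  have "((\<lambda>x. (?q x * ln (1 + cos x) + ?q x * ln (5 + 4 * cos x))
      + (9/2 * ln (1 + cos x) + 9/2 * ln (5 + 4 * cos x))) has_integral
      (73 * pi / 12 + 167 * pi / 48) + (9/2 * (- pi * ln 2) + 9/2 * (2 * pi * ln 2))) {0..pi}"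
    by (intro has_integral_add has_integral_mult_right has_integral_trig_Q'_ln_one_plus_cos
        has_integral_trig_Q'_ln_five_plus_four_cos has_integral_ln_one_plus_cos
        has_integral_ln_five_plus_four_cos)
  then have hi: "((\<lambda>x. (?q x * ln (1 + cos x) + ?q x * ln (5 + 4 * cos x))
      + (9/2 * ln (1 + cos x) + 9/2 * ln (5 + 4 * cos x))) has_integral
      459 * pi / 48 + 9/2 * pi * ln 2) {0..pi}"
    by (simp add: field_simps)
  have "cos x * circ_ent (cos x) = (?q x * ln (1 + cos x) + ?q x * ln (5 + 4 * cos x))
      + (9/2 * ln (1 + cos x) + 9/2 * ln (5 + 4 * cos x))" if "x \<in> {0..pi} - {pi}" for x
  proof -
    have "circ_poly (cos x) = (1 + cos x) * (5 + 4 * cos x)"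
      by (simp add: circ_poly_def power2_eq_square algebra_simps)
    then have "ln (circ_poly (cos x)) = ln (1 + cos x) + ln (5 + 4 * cos x)"
      using one_plus_cos_pos[of x] five_plus_four_cos_pos[of x] that by (simp add: ln_mult)
    then show ?thesis
      unfolding circ_ent_def by (simp add: algebra_simps)
  qed
  then show ?thesis
    using has_integral_spike_finite[of "{pi}", OF _ _ hi] by simp
qed

section \<open>The integral over the unit disc\<close>

(* ln 6 - ln |P(q)| for a unit quaternion q with real part a and i-component b; it is nonnegative because
   |P(q)| <= 6 on the sphere. *)
definition deficit :: "real \<Rightarrow> real \<Rightarrow> real" where
  "deficit a b = ln 6 - ln (18 - 18 * b - 8 * a\<^sup>2) / 2"

definition chord_integral :: "real \<Rightarrow> real" where
  "chord_integral a = (2 * ln 6 - ln 2 + 1) * sqrt (1 - a\<^sup>2)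
     - (circ_ent (sqrt (1 - a\<^sup>2)) - circ_ent (- sqrt (1 - a\<^sup>2))) / 18"

lemma circ_poly_nonneg: "-1 \<le> y \<Longrightarrow> 0 \<le> circ_poly y"
proof -
  assume "-1 \<le> y"
  then have "0 \<le> (4 * y + 5) * (y + 1)"
    by simp
  then show ?thesis
    by (simp add: circ_poly_def power2_eq_square algebra_simps)
qed

lemma continuous_on_circ_ent_comp:
  assumes "continuous_on S f" "\<And>x. x \<in> S \<Longrightarrow> -1 \<le> f x"
  shows "continuous_on S (\<lambda>x. circ_ent (f x))"
proof -
  have "continuous_on S (\<lambda>x. circ_poly (f x))"
    unfolding circ_poly_def by (intro continuous_intros assms(1))
  moreover have "(\<lambda>x. circ_poly (f x)) ` S \<subseteq> {0..}"
    using assms(2) circ_poly_nonneg by auto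
  ultimately show ?thesis
    unfolding circ_ent_def by (rule continuous_on_compose2[OF continuous_on_x_ln_x])
qed

lemma deficit_nonneg:
  assumes "a\<^sup>2 + b\<^sup>2 \<le> 1"
  shows "0 \<le> deficit a b"
proof -
  have "b\<^sup>2 \<le> 1"
    using assms zero_le_power2[of a] by linarith
  then have b: "-1 \<le> b" "b \<le> 1"
    by (auto simp: abs_square_le_1 abs_le_iff)
  have "18 - 18 * b - 8 * a\<^sup>2 = (1 - b) * (10 - 8 * b) + 8 * (1 - b\<^sup>2 - a\<^sup>2)"
    by (simp add: power2_eq_square algebra_simps)
  moreover have "0 \<le> (1 - b) * (10 - 8 * b)" "0 \<le> 8 * (1 - b\<^sup>2 - a\<^sup>2)"
    using b assms by simp_all
  ultimately have "0 \<le> 18 - 18 * b - 8 * a\<^sup>2"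
    by linarith
  moreover have "18 - 18 * b - 8 * a\<^sup>2 \<le> 36"
    using b zero_le_power2[of a] by linarith
  ultimately have "ln (18 - 18 * b - 8 * a\<^sup>2) \<le> ln 36"
    by (cases "18 - 18 * b - 8 * a\<^sup>2 = 0") (auto intro: ln_mono)
  moreover have "ln (36::real) = 2 * ln 6"
    using ln_mult[of 6 6] by simp
  ultimately show ?thesis
    unfolding deficit_def by simp
qed

lemma has_integral_deficit_chord:
  assumes "\<bar>a\<bar> \<le> 1"
  shows "(deficit a has_integral chord_integral a) {- sqrt (1 - a\<^sup>2) .. sqrt (1 - a\<^sup>2)}"
proof -
  define c where "c = sqrt (1 - a\<^sup>2)"
  define M where "M = 9 - 4 * a\<^sup>2"
  have c: "0 \<le> c" "c \<le> 1" "c\<^sup>2 = 1 - a\<^sup>2"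
    unfolding c_def using assms by (simp_all add: abs_square_le_1)
  have ends: "M - 9 * c = circ_poly (- c)" "M + 9 * c = circ_poly c"
    unfolding M_def circ_poly_def using c(3) by (simp_all add: algebra_simps)
  have "((\<lambda>b. ln (M - 9 * b)) has_integral
      ((M + 9 * c) * ln (M + 9 * c) - (M - 9 * c) * ln (M - 9 * c)) / 9 - 2 * c) {-c..c}"
    using has_integral_ln_affine[of 9 "-c" c M] c ends circ_poly_nonneg[of "-c"] by simp
  then have hi: "((\<lambda>b. (ln 6 - ln 2 / 2) - ln (M - 9 * b) / 2) has_integral
      (ln 6 - ln 2 / 2) * (2 * c) - (((M + 9 * c) * ln (M + 9 * c) - (M - 9 * c) * ln (M - 9 * c)) / 9 - 2 * c) / 2)
      {-c..c}"
    using c by (intro has_integral_diff has_integral_divide has_integral_const_real[THEN has_integral_eq_rhs]) auto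
  have val: "(ln 6 - ln 2 / 2) * (2 * c)
      - (((M + 9 * c) * ln (M + 9 * c) - (M - 9 * c) * ln (M - 9 * c)) / 9 - 2 * c) / 2
      = chord_integral a"
    unfolding chord_integral_def c_def[symmetric] circ_ent_def ends by (simp add: field_simps)
  have eq: "deficit a b = (ln 6 - ln 2 / 2) - ln (M - 9 * b) / 2" if "b \<in> {-c..c} - {c}" for b
  proof -
    have "0 < M - 9 * b"
      using that ends circ_poly_nonneg[of "-c"] c by auto
    have "ln (18 - 18 * b - 8 * a\<^sup>2) = ln (2 * (M - 9 * b))"
      unfolding M_def by (simp add: algebra_simps)
    also have "\<dots> = ln 2 + ln (M - 9 * b)"
      by (rule ln_mult_pos) (use \<open>0 < M - 9 * b\<close> in auto)
    finally show ?thesis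
      unfolding deficit_def by linarith
  qed
  show ?thesis
    using has_integral_spike_finite[of "{c}", OF _ eq hi] unfolding val c_def[symmetric] by simp
qed

lemma continuous_on_chord_integral: "continuous_on {-1..1} chord_integral"
proof -
  have cont: "continuous_on {-1..1} (\<lambda>a::real. sqrt (1 - a\<^sup>2))"
    by (intro continuous_intros)
  have bounds: "-1 \<le> sqrt (1 - a\<^sup>2)" "-1 \<le> - sqrt (1 - a\<^sup>2)" if "a \<in> {-1..1}" for a :: real
  proof -
    have "a\<^sup>2 \<le> 1"
      using that by (simp add: abs_square_le_1 abs_le_iff)
    then have "0 \<le> sqrt (1 - a\<^sup>2)" "sqrt (1 - a\<^sup>2) \<le> 1"
      by simp_all
    then show "-1 \<le> sqrt (1 - a\<^sup>2)" "-1 \<le> - sqrt (1 - a\<^sup>2)"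
      by linarith+
  qed
  have "continuous_on {-1..1} (\<lambda>a. circ_ent (sqrt (1 - a\<^sup>2)))"
    by (rule continuous_on_circ_ent_comp[OF cont bounds(1)])
  moreover have "continuous_on {-1..1} (\<lambda>a. circ_ent (- sqrt (1 - a\<^sup>2)))"
    by (rule continuous_on_circ_ent_comp[OF continuous_on_minus[OF cont] bounds(2)])
  ultimately show ?thesis
    unfolding chord_integral_def using cont by (intro continuous_intros) auto
qed

lemma cos_mult_chord_integral_sin:
  assumes "x \<in> {0..pi/2}"
  shows "cos x * chord_integral (sin x) = (2 * ln 6 - ln 2 + 1) * (cos x * cos x)
           - (cos x * circ_ent (cos x) - cos x * circ_ent (- cos x)) / 18"
proof -
  have "0 \<le> cos x"
    using assms by (intro cos_ge_zero) auto
  then have "sqrt (1 - (sin x)\<^sup>2) = cos x"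
    by (simp add: cos_squared_eq[symmetric])
  then show ?thesis
    unfolding chord_integral_def by (simp add: field_simps)
qed

lemma has_integral_cos_sq: "((\<lambda>x. cos x * cos x) has_integral pi/4) {0..pi/2}"
proof -
  let ?G = "\<lambda>x::real. x/2 + sin x * cos x / 2"
  have "((\<lambda>x. cos x * cos x) has_integral ?G (pi/2) - ?G 0) {0..pi/2}"
  proof (rule fundamental_theorem_of_calculus)
    fix x assume "x \<in> {0..pi/2}"
    have "(?G has_real_derivative 1/2 + (cos x * cos x - sin x * sin x) / 2) (at x within {0..pi/2})"
      by (auto intro!: derivative_eq_intros simp: field_simps)
    moreover have "1/2 + (cos x * cos x - sin x * sin x) / 2 = cos x * cos x"
      using sin_times_sin[of x] by (simp add: field_simps)
    ultimately show "(?G has_vector_derivative cos x * cos x) (at x within {0..pi/2})"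
      by (simp add: has_real_derivative_iff_has_vector_derivative)
  qed simp
  then show ?thesis
    by simp
qed

lemma has_integral_chord_integral_01:
  "(chord_integral has_integral
      (2 * ln 6 - ln 2 + 1) * (pi/4) - (459 * pi / 48 + 9/2 * pi * ln 2) / 18) {0..1}"
proof -
  let ?J = "(2 * ln 6 - ln 2 + 1) * (pi/4) - (459 * pi / 48 + 9/2 * pi * ln 2) / 18"
  have "((\<lambda>x. cos x * circ_ent (cos x) + cos (0 + pi - x) * circ_ent (cos (0 + pi - x))) has_integral
      459 * pi / 48 + 9/2 * pi * ln 2) {0..(0 + pi) / 2}"
    by (rule has_integral_fold_midpoint[OF has_integral_cos_circ_ent]) simp
  then have "((\<lambda>x. cos x * circ_ent (cos x) - cos x * circ_ent (- cos x)) has_integral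
      459 * pi / 48 + 9/2 * pi * ln 2) {0..pi/2}"
    by simp
  then have long: "((\<lambda>x. (2 * ln 6 - ln 2 + 1) * (cos x * cos x)
        - (cos x * circ_ent (cos x) - cos x * circ_ent (- cos x)) / 18) has_integral ?J) {0..pi/2}"
    by (intro has_integral_diff has_integral_mult_right has_integral_divide has_integral_cos_sq)
  have sub: "((\<lambda>x. cos x * chord_integral (sin x)) has_integral ?J) {0..pi/2}"
    by (rule has_integral_eq[OF _ long]) (rule cos_mult_chord_integral_sin[symmetric])
  have cont: "continuous_on {0..1} chord_integral"
    by (rule continuous_on_subset[OF continuous_on_chord_integral]) auto
  have "((\<lambda>x. cos x *\<^sub>R chord_integral (sin x)) has_integral integral {sin 0..sin (pi/2)} chord_integral)
      {0..pi/2}"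
  proof (rule has_integral_substitution[where c = 0 and d = 1])
    show "sin ` {0..pi/2} \<subseteq> {0..1}"
      using sin_ge_zero sin_le_one by fastforce
    show "(sin has_real_derivative cos x) (at x within {0..pi/2})" for x
      by (auto intro!: derivative_eq_intros)
  qed (auto intro: cont)
  then have "integral {0..1} chord_integral = ?J"
    using has_integral_unique[OF _ sub] by simp
  then show ?thesis
    using integrable_integral[OF integrable_continuous_interval[OF cont]] by simp
qed

lemma has_integral_chord_integral:
  "(chord_integral has_integral pi * (ln 3 - 9/16)) {-1..1}"
proof -
  let ?J = "(2 * ln 6 - ln 2 + 1) * (pi/4) - (459 * pi / 48 + 9/2 * pi * ln 2) / 18"
  have "((\<lambda>x. chord_integral (0 - x)) has_integral ?J) {-1..0}"
    by (rule has_integral_reflect_shift_real) (use has_integral_chord_integral_01 in simp)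
  moreover have "chord_integral (0 - x) = chord_integral x" for x
    by (simp add: chord_integral_def)
  ultimately have "(chord_integral has_integral ?J) {-1..0}"
    by simp
  then have "(chord_integral has_integral ?J + ?J) {-1..1}"
    by (intro has_integral_combine[OF _ _ _ has_integral_chord_integral_01]) auto
  moreover have "?J + ?J = pi * (ln 3 - 9/16)"
  proof -
    have "ln (6::real) = ln 2 + ln 3"
      using ln_mult[of 2 3] by simp
    then show ?thesis
      by (simp add: field_simps)
  qed
  ultimately show ?thesis
    by simp
qed

lemma mem_unit_cball_iff: "(a, b) \<in> cball (0::real \<times> real) 1 \<longleftrightarrow> a\<^sup>2 + b\<^sup>2 \<le> 1"
  by (simp add: dist_norm norm_Pair real_sqrt_le_1_iff)

lemma mem_unit_cball_iff_chord:
  assumes "\<bar>a\<bar> \<le> 1"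
  shows "(a, b) \<in> cball (0::real \<times> real) 1 \<longleftrightarrow> b \<in> {- sqrt (1 - a\<^sup>2) .. sqrt (1 - a\<^sup>2)}"
proof -
  have "a\<^sup>2 + b\<^sup>2 \<le> 1 \<longleftrightarrow> \<bar>b\<bar> \<le> sqrt (1 - a\<^sup>2)"
    using assms real_le_rsqrt real_sqrt_le_iff[of "b\<^sup>2" "1 - a\<^sup>2"] by (auto simp: abs_square_le_1)
  then show ?thesis
    unfolding mem_unit_cball_iff atLeastAtMost_iff abs_le_iff by auto
qed

lemma deficit_nonneg_chord:
  assumes "\<bar>a\<bar> \<le> 1" "b \<in> {- sqrt (1 - a\<^sup>2) .. sqrt (1 - a\<^sup>2)}"
  shows "0 \<le> deficit a b"
proof -
  have "(a, b) \<in> cball 0 1"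
    using mem_unit_cball_iff_chord[OF assms(1)] assms(2) by simp
  then show ?thesis
    unfolding mem_unit_cball_iff by (rule deficit_nonneg)
qed

lemma chord_integral_nonneg:
  assumes "\<bar>a\<bar> \<le> 1"
  shows "0 \<le> chord_integral a"
  by (rule has_integral_nonneg[OF has_integral_deficit_chord[OF assms]])
    (rule deficit_nonneg_chord[OF assms])

lemma nn_integral_deficit_chord:
  "(\<integral>\<^sup>+ b. indicator (cball 0 1) (a, b) * ennreal (deficit a b) \<partial>lborel)
     = ennreal (chord_integral a) * indicator {-1..1} a"
proof (cases "\<bar>a\<bar> \<le> 1")
  case True
  let ?c = "sqrt (1 - a\<^sup>2)"
  have "(\<integral>\<^sup>+ b. indicator (cball 0 1) (a, b) * ennreal (deficit a b) \<partial>lborel)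
      = (\<integral>\<^sup>+ b. ennreal (deficit a b) * indicator {-?c..?c} b \<partial>lborel)"
    using mem_unit_cball_iff_chord[OF True]
    by (intro nn_integral_cong) (simp add: indicator_def mult.commute)
  also have "\<dots> = ennreal (chord_integral a)"
    using True mem_unit_cball_iff_chord[OF True]
    by (intro nn_integral_has_integral_lebesgue' has_integral_deficit_chord deficit_nonneg_chord)
  finally show ?thesis
    using True by (simp add: abs_le_iff)
next
  case False
  have "(a, b) \<notin> cball (0::real \<times> real) 1" for b
  proof
    assume "(a, b) \<in> cball (0::real \<times> real) 1"
    then have "a\<^sup>2 \<le> 1"
      unfolding mem_unit_cball_iff using zero_le_power2[of b] by linarith
    with False show False
      by (simp add: abs_square_le_1)
  qed
  moreover have "a \<notin> {-1..1}"
    using False by auto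
  ultimately show ?thesis
    by simp
qed

lemma nn_integral_deficit_disc:
  "(\<integral>\<^sup>+ z. indicator (cball 0 1) z * ennreal (deficit (fst z) (snd z)) \<partial>lborel)
     = ennreal (pi * (ln 3 - 9/16))"
proof -
  have "(\<lambda>z::real \<times> real. ennreal (deficit (fst z) (snd z))) \<in> borel_measurable borel"
    unfolding deficit_def by measurable
  then have meas: "(\<lambda>z::real \<times> real. indicator (cball 0 1) z * ennreal (deficit (fst z) (snd z)))
      \<in> borel_measurable borel"
    by (intro borel_measurable_times_ennreal borel_measurable_indicator) auto
  have "(\<integral>\<^sup>+ z. indicator (cball 0 1) z * ennreal (deficit (fst z) (snd z)) \<partial>lborel)
      = integral\<^sup>N (lborel \<Otimes>\<^sub>M lborel)
          (\<lambda>z::real \<times> real. indicator (cball 0 1) z * ennreal (deficit (fst z) (snd z)))"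
    by (simp add: lborel_prod)
  also have "\<dots> = (\<integral>\<^sup>+ a. (\<integral>\<^sup>+ b. indicator (cball 0 1) (a, b) * ennreal (deficit a b) \<partial>lborel) \<partial>lborel)"
    by (subst lborel.nn_integral_fst[symmetric]) (use meas in \<open>simp_all add: lborel_prod\<close>)
  also have "\<dots> = (\<integral>\<^sup>+ a. ennreal (chord_integral a) * indicator {-1..1} a \<partial>lborel)"
    by (simp add: nn_integral_deficit_chord)
  also have "\<dots> = ennreal (pi * (ln 3 - 9/16))"
    by (rule nn_integral_has_integral_lebesgue'[OF _ has_integral_chord_integral])
      (auto intro: chord_integral_nonneg)
  finally show ?thesis .
qed

section \<open>The Mahler measure\<close>

lemma ln_norm_qeval_example_poly:
  assumes "norm y = 1"
  shows "ln (norm (qeval example_poly y)) = ln 6 - deficit (fst y) (fst (snd y))"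
proof -
  obtain a b c d where y: "y = (a, b, c, d)"
    by (cases y) auto
  have "a\<^sup>2 + b\<^sup>2 + c\<^sup>2 + d\<^sup>2 = 1"
    using assms unfolding y norm_quat by simp
  then have sq: "(norm (qeval example_poly y))\<^sup>2 = 18 - 18 * b - 8 * a\<^sup>2"
    unfolding y by (rule norm_qeval_example_poly_sq)
  then have "norm (qeval example_poly y) = sqrt (18 - 18 * b - 8 * a\<^sup>2)"
    by (metis norm_ge_zero real_sqrt_unique)
  moreover have "0 \<le> 18 - 18 * b - 8 * a\<^sup>2"
    using sq by (metis zero_le_power2)
  ultimately show ?thesis
    unfolding y deficit_def by (simp add: ln_sqrt)
qed

lemma ln_3_ge: "9/16 \<le> ln (3::real)"
proof -
  have "ln (1/3::real) \<le> 1/3 - 1"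
    by (rule ln_le_minus_one) simp
  then show ?thesis
    by (simp add: ln_div)
qed

lemma has_bochner_integral_haar_S3_deficit:
  "has_bochner_integral haar_S3 (\<lambda>y. deficit (fst y) (fst (snd y))) (ln 3 - 9/16)"
proof (rule has_bochner_integral_nn_integral)
  show "(\<lambda>y. deficit (fst y) (fst (snd y))) \<in> borel_measurable haar_S3"
    unfolding deficit_def haar_S3_def by measurable
  show "AE y in haar_S3. 0 \<le> deficit (fst y) (fst (snd y))"
    using AE_haar_S3_norm_eq_1
  proof eventually_elim
    case (elim y)
    obtain a b c d where y: "y = (a, b, c, d)"
      by (cases y) auto
    then have "a\<^sup>2 + b\<^sup>2 + c\<^sup>2 + d\<^sup>2 = 1"
      using elim by (simp add: norm_quat)
    then have "a\<^sup>2 + b\<^sup>2 \<le> 1"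
      using zero_le_power2[of c] zero_le_power2[of d] by linarith
    then have "(fst y)\<^sup>2 + (fst (snd y))\<^sup>2 \<le> 1"
      unfolding y by simp
    then show ?case
      by (rule deficit_nonneg)
  qed
  show "0 \<le> ln 3 - (9/16 :: real)"
    using ln_3_ge by simp
  have "(\<lambda>z. ennreal (deficit (fst z) (snd z))) \<in> borel_measurable borel"
    unfolding deficit_def by measurable
  then have "(\<integral>\<^sup>+ y. ennreal (deficit (fst y) (fst (snd y))) \<partial>haar_S3)
      = ennreal (1 / pi) * ennreal (pi * (ln 3 - 9/16))"
    using nn_integral_haar_S3_proj2[of "\<lambda>z. ennreal (deficit (fst z) (snd z))"]
    by (simp add: nn_integral_deficit_disc)
  also have "\<dots> = ennreal (ln 3 - 9/16)"
    using ln_3_ge by (simp add: ennreal_mult[symmetric])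
  finally show "(\<integral>\<^sup>+ y. ennreal (deficit (fst y) (fst (snd y))) \<partial>haar_S3) = ennreal (ln 3 - 9/16)" .
qed

lemma mH_example_poly: "mH example_poly = 9/16 + ln 2"
proof -
  interpret prob_space haar_S3
    by (rule prob_space_haar_S3)
  have "qeval example_poly \<in> borel_measurable borel"
    by (intro borel_measurable_continuous_onI continuous_qeval_example_poly)
  then have meas: "(\<lambda>y. ln (norm (qeval example_poly y))) \<in> borel_measurable borel"
    by (rule measurable_compose) measurable
  have "mH example_poly = (\<integral> y. ln 6 - deficit (fst y) (fst (snd y)) \<partial>haar_S3)"
    unfolding mH_def
  proof (rule integral_cong_AE)
    show "AE y in haar_S3. ln (norm (qeval example_poly y)) = ln 6 - deficit (fst y) (fst (snd y))"
      using AE_haar_S3_norm_eq_1 by eventually_elim (rule ln_norm_qeval_example_poly)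
  qed (use meas in \<open>simp_all add: haar_S3_def deficit_def\<close>)
  also have "\<dots> = ln 6 - (ln 3 - 9/16)"
    using has_bochner_integral_haar_S3_deficit
    by (simp add: has_bochner_integral_iff prob_space)
  also have "\<dots> = 9/16 + ln 2"
    using ln_mult[of 2 3] by simp
  finally show ?thesis .
qed

theorem proposition5p5:
  shows "qstar [- qi, qone] [- 2 *\<^sub>R qi, qone] = [- qreal 2, - 3 *\<^sub>R qi, qone]
     \<and> mH (qstar [- qi, qone] [- 2 *\<^sub>R qi, qone]) = 9 / 16 + ln 2
     \<and> mH [- qreal 2, - 3 *\<^sub>R qi, qone] = 9 / 16 + ln 2"
  using qstar_example_poly mH_example_poly by simp

end
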